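(* For all integers $n,m\ge 2$, \[ \gamma_{2t}(K_n\Box K_m)+1\le\gamma_{2t}(K_{n+1}\Box K_{m+1})\le\gamma_{2t}(K_n\Box K_m)+2. \]
   Context: For a graph $G=(V,E)$, a set $S\subseteq V$ is a total $2$-dominating set if every vertex of $V$ (including those in $S$) is adjacent to at least $2$ vertices of $S$; $\gamma_{2t}(G)$ is the minimum cardinality of such a set. $G\Box H$ denotes the Cartesian product: vertex set $V(G)\times V(H)$, with $(u_1,v_1)\sim(u_2,v_2)$ iff either $u_1=u_2$ and $v_1\sim v_2$, or $v_1=v_2$ and $u_1\sim u_2$. $K_n$ is the complete graph on $n$ vertices. *)

theory Defs
  imports Main
begin

text \<open>A graph is given by a vertex set V and a symmetric, irreflexive adjacency relation adj.\<close>

definition total_k_dominating :: "nat \<Rightarrow> 'a set \<Rightarrow> ('a \<Rightarrow> 'a \<Rightarrow> bool) \<Rightarrow> 'a set \<Rightarrow> bool" where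
  "total_k_dominating k V adj S \<longleftrightarrow>
     S \<subseteq> V \<and> (\<forall>v\<in>V. card {u\<in>S. adj v u} \<ge> k)"

definition gamma_2t :: "'a set \<Rightarrow> ('a \<Rightarrow> 'a \<Rightarrow> bool) \<Rightarrow> nat" where
  "gamma_2t V adj = Min (card ` {S. total_k_dominating 2 V adj S})"

definition complete_adj :: "nat \<Rightarrow> nat \<Rightarrow> bool" where
  "complete_adj u v \<longleftrightarrow> u \<noteq> v"

definition cart_adj :: "('a \<Rightarrow> 'a \<Rightarrow> bool) \<Rightarrow> ('b \<Rightarrow> 'b \<Rightarrow> bool) \<Rightarrow> 'a \<times> 'b \<Rightarrow> 'a \<times> 'b \<Rightarrow> bool" where
  "cart_adj adjG adjH p q \<longleftrightarrow>
     (fst p = fst q \<and> adjH (snd p) (snd q)) \<or> (snd p = snd q \<and> adjG (fst p) (fst q))"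

definition gamma_2t_KK :: "nat \<Rightarrow> nat \<Rightarrow> nat" where
  "gamma_2t_KK n m = gamma_2t ({0..<n} \<times> {0..<m}) (cart_adj complete_adj complete_adj)"

end

(* K_n \<box> K_m is the rook's graph on an n \<times> m board, so S is total 2-dominating iff
   |row_i S| + |col_j S| \<ge> 2 at every cell (i, j), and \<ge> 4 at the cells of S.
   If a row or a column misses S, every line crossing it needs two points of S, so
   |S| \<ge> 2 min(n, m); otherwise weighting each point of S by 1/|row| + 1/|col| \<le> 4/3
   counts every line exactly once, so 3(n + m) \<le> 4|S|. Conversely, two full lines, a
   cross, or two cyclically wrapped diagonal bands give \<gamma> \<le> 2 min(n, m) and
   4\<gamma> \<le> 3(n + m) + 5. These windows for \<gamma> at (n, m) and at (n + 1, m + 1) force an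
   increase of 1 or 2. *)

theory Submission
  imports Defs Complex_Main
begin

abbreviation rook_adj :: "nat \<times> nat \<Rightarrow> nat \<times> nat \<Rightarrow> bool" where
  "rook_adj \<equiv> cart_adj complete_adj complete_adj"

lemma rook_adj_iff: "rook_adj u v \<longleftrightarrow> u \<noteq> v \<and> (fst u = fst v \<or> snd u = snd v)"
  by (auto simp: cart_adj_def complete_adj_def prod_eq_iff)

definition row :: "('a \<times> 'b) set \<Rightarrow> 'a \<Rightarrow> ('a \<times> 'b) set" where
  "row S i = {u \<in> S. fst u = i}"

definition col :: "('a \<times> 'b) set \<Rightarrow> 'b \<Rightarrow> ('a \<times> 'b) set" where
  "col S j = {u \<in> S. snd u = j}"

lemma card_rook_neighbours:
  assumes "finite S"
  shows "card {v \<in> S. rook_adj u v} + (if u \<in> S then 2 else 0)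
           = card (row S (fst u)) + card (col S (snd u))"
proof -
  let ?R = "row S (fst u)" and ?C = "col S (snd u)"
  have fin: "finite ?R" "finite ?C"
    using assms by (simp_all add: row_def col_def)
  have "{v \<in> S. rook_adj u v} = (?R \<union> ?C) - {u}"
    by (auto simp: rook_adj_iff row_def col_def)
  moreover have "?R \<inter> ?C = S \<inter> {u}" and "u \<in> ?R \<union> ?C \<longleftrightarrow> u \<in> S"
    by (auto simp: row_def col_def prod_eq_iff)
  moreover have "card (?R \<union> ?C) \<ge> 1" if "u \<in> ?R \<union> ?C"
    using that fin by (auto simp: Suc_le_eq card_gt_0_iff)
  ultimately show ?thesis
    using card_Un_Int[OF fin] by (cases "u \<in> S") (simp_all add: card_Diff_singleton_if)
qed

lemma total_k_dominating_rook_iff: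
  assumes "finite A" "finite B"
  shows "total_k_dominating k (A \<times> B) rook_adj S \<longleftrightarrow>
           S \<subseteq> A \<times> B \<and>
           (\<forall>i\<in>A. \<forall>j\<in>B. k + (if (i, j) \<in> S then 2 else 0) \<le> card (row S i) + card (col S j))"
proof (cases "S \<subseteq> A \<times> B")
  case True
  have "k \<le> card {u \<in> S. rook_adj (i, j) u} \<longleftrightarrow>
          k + (if (i, j) \<in> S then 2 else 0) \<le> card (row S i) + card (col S j)" for i j
    using card_rook_neighbours[of S "(i, j)"] assms finite_subset[OF True] by auto
  then show ?thesis
    unfolding total_k_dominating_def split_paired_Ball_Sigma by (simp only: True simp_thms)
qed (simp add: total_k_dominating_def)

lemma finite_row: "finite S \<Longrightarrow> finite (row S i)"
  and finite_col: "finite S \<Longrightarrow> finite (col S j)"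
  by (simp_all add: row_def col_def)

lemma total_2_dominating_rookI:
  assumes "finite A" "finite B" "S \<subseteq> A \<times> B"
    and rows: "\<And>i. i \<in> A \<Longrightarrow> row S i \<noteq> {}"
    and cols: "\<And>j. j \<in> B \<Longrightarrow> col S j \<noteq> {}"
    and long_line: "\<And>i j. (i, j) \<in> S \<Longrightarrow> 3 \<le> card (row S i) \<or> 3 \<le> card (col S j)"
  shows "total_k_dominating 2 (A \<times> B) rook_adj S"
proof -
  have fin: "finite S"
    using assms(1-3) finite_subset by blast
  have "1 \<le> card (row S i)" if "i \<in> A" for i
    using rows[OF that] finite_row[OF fin] by (simp add: Suc_le_eq card_gt_0_iff)
  moreover have "1 \<le> card (col S j)" if "j \<in> B" for j
    using cols[OF that] finite_col[OF fin] by (simp add: Suc_le_eq card_gt_0_iff)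
  ultimately show ?thesis
    unfolding total_k_dominating_rook_iff[OF assms(1,2)]
    using assms(3) long_line by fastforce
qed

lemma card_eq_sum_card_row:
  assumes "finite A" "finite B" "S \<subseteq> A \<times> B"
  shows "card S = (\<Sum>i\<in>A. card (row S i))"
proof -
  have fin: "finite S"
    using assms finite_subset by blast
  have "S = (\<Union>i\<in>A. row S i)"
    using assms(3) by (auto simp: row_def)
  also have "card \<dots> = (\<Sum>i\<in>A. card (row S i))"
    by (rule card_UN_disjoint) (use fin in \<open>auto simp: assms row_def\<close>)
  finally show ?thesis .
qed

lemma card_eq_sum_card_col:
  assumes "finite A" "finite B" "S \<subseteq> A \<times> B"
  shows "card S = (\<Sum>j\<in>B. card (col S j))"
proof -
  have fin: "finite S"
    using assms finite_subset by blast
  have "S = (\<Union>j\<in>B. col S j)"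
    using assms(3) by (auto simp: col_def)
  also have "card \<dots> = (\<Sum>j\<in>B. card (col S j))"
    by (rule card_UN_disjoint) (use fin in \<open>auto simp: assms col_def\<close>)
  finally show ?thesis .
qed

lemma sum_inverse_card_fibre:
  assumes "finite S"
  shows "(\<Sum>u\<in>S. 1 / real (card {v \<in> S. f v = f u})) = card (f ` S)"
proof -
  have "(\<Sum>u\<in>S. 1 / real (card {v \<in> S. f v = f u}))
          = (\<Sum>y\<in>f ` S. \<Sum>u\<in>{v \<in> S. f v = y}. 1 / real (card {v \<in> S. f v = y}))"
    by (subst sum.image_gen[OF assms, of _ f]) (auto intro!: sum.cong)
  also have "\<dots> = (\<Sum>y\<in>f ` S. 1)"
  proof (rule sum.cong)
    fix y assume "y \<in> f ` S"
    then have "card {v \<in> S. f v = y} \<noteq> 0"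
      using assms by auto
    then show "(\<Sum>u\<in>{v \<in> S. f v = y}. 1 / real (card {v \<in> S. f v = y})) = 1"
      by simp
  qed simp
  finally show ?thesis
    by simp
qed

lemma inverse_add_inverse_le_four_thirds:
  fixes r c :: nat
  assumes "1 \<le> r" "1 \<le> c" "4 \<le> r + c"
  shows "1 / real r + 1 / real c \<le> 4 / 3"
proof -
  consider "r = 1" "3 \<le> c" | "c = 1" "3 \<le> r" | "2 \<le> r" "2 \<le> c"
    using assms by linarith
  then show ?thesis
  proof cases
    case 3
    then have "1 / real r \<le> 1 / 2" "1 / real c \<le> 1 / 2"
      by (simp_all add: field_simps)
    then show ?thesis
      by linarith
  qed (simp_all add: field_simps)
qed

lemma total_2_dominating_rook_card_lower:
  assumes "finite A" "finite B" "total_k_dominating 2 (A \<times> B) rook_adj S"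
  shows "2 * min (card A) (card B) \<le> card S \<or> 3 * (card A + card B) \<le> 4 * card S"
proof -
  have sub: "S \<subseteq> A \<times> B"
    and count: "\<And>i j. i \<in> A \<Longrightarrow> j \<in> B \<Longrightarrow>
                  2 + (if (i, j) \<in> S then 2 else 0) \<le> card (row S i) + card (col S j)"
    using assms(3) unfolding total_k_dominating_rook_iff[OF assms(1,2)] by auto
  have fin: "finite S"
    using assms(1,2) sub finite_subset by blast
  consider (empty_row) i where "i \<in> A" "row S i = {}"
    | (empty_col) j where "j \<in> B" "col S j = {}"
    | (no_empty_line) "\<forall>i\<in>A. row S i \<noteq> {}" "\<forall>j\<in>B. col S j \<noteq> {}"
    by blast
  then show ?thesis
  proof cases
    case empty_row
    have "2 \<le> card (col S j)" if "j \<in> B" for j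
    proof -
      have "(i, j) \<notin> S"
        using empty_row(2) by (auto simp: row_def)
      then show ?thesis
        using count[OF empty_row(1) that] empty_row(2) by simp
    qed
    then have "(\<Sum>j\<in>B. 2) \<le> card S"
      unfolding card_eq_sum_card_col[OF assms(1,2) sub] by (rule sum_mono)
    then show ?thesis
      by (simp add: min_def)
  next
    case empty_col
    have "2 \<le> card (row S i)" if "i \<in> A" for i
    proof -
      have "(i, j) \<notin> S"
        using empty_col(2) by (auto simp: col_def)
      then show ?thesis
        using count[OF that empty_col(1)] empty_col(2) by simp
    qed
    then have "(\<Sum>i\<in>A. 2) \<le> card S"
      unfolding card_eq_sum_card_row[OF assms(1,2) sub] by (rule sum_mono)
    then show ?thesis
      by (simp add: min_def)
  next
    case no_empty_line
    \<comment> \<open>Every row and every column of S carries total weight 1.\<close>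
    have "fst ` S = A" and "snd ` S = B"
      using sub no_empty_line by (force simp: row_def col_def)+
    then have "real (card A + card B)
                 = (\<Sum>u\<in>S. 1 / real (card (row S (fst u))) + 1 / real (card (col S (snd u))))"
      using sum_inverse_card_fibre[OF fin, of fst] sum_inverse_card_fibre[OF fin, of snd]
      by (simp add: sum.distrib row_def col_def)
    also have "\<dots> \<le> (\<Sum>u\<in>S. 4 / 3)"
    proof (rule sum_mono)
      fix u assume "u \<in> S"
      then have "u \<in> row S (fst u)" "u \<in> col S (snd u)" and "fst u \<in> A" "snd u \<in> B"
        using sub by (auto simp: row_def col_def)
      then show "1 / real (card (row S (fst u))) + 1 / real (card (col S (snd u))) \<le> 4 / 3"
        using count[of "fst u" "snd u"] \<open>u \<in> S\<close> finite_row[OF fin] finite_col[OF fin]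
        by (intro inverse_add_inverse_le_four_thirds) (auto simp: Suc_le_eq card_gt_0_iff)
    qed
    finally have "real (3 * (card A + card B)) \<le> real (4 * card S)"
      by simp
    then show ?thesis
      by linarith
  qed
qed

lemma total_k_dominating_rook_swap:
  "total_k_dominating k (B \<times> A) rook_adj (prod.swap ` S) \<longleftrightarrow> total_k_dominating k (A \<times> B) rook_adj S"
proof -
  have "rook_adj (prod.swap v) (prod.swap u) \<longleftrightarrow> rook_adj v u" for u v
    by (auto simp: rook_adj_iff prod_eq_iff)
  then have "{u \<in> prod.swap ` S. rook_adj (prod.swap v) u} = prod.swap ` {u \<in> S. rook_adj v u}" for v
    by (simp add: Compr_image_eq)
  then have "card {u \<in> prod.swap ` S. rook_adj (prod.swap v) u} = card {u \<in> S. rook_adj v u}" for v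
    by (simp add: card_image)
  moreover have "prod.swap ` S \<subseteq> B \<times> A \<longleftrightarrow> S \<subseteq> A \<times> B"
    and "(\<forall>v\<in>B \<times> A. P v) \<longleftrightarrow> (\<forall>v\<in>A \<times> B. P (prod.swap v))" for P
    by auto
  ultimately show ?thesis
    unfolding total_k_dominating_def by (simp del: split_paired_Ball_Sigma)
qed

lemma finite_total_k_dominating: "finite V \<Longrightarrow> finite {S. total_k_dominating k V adj S}"
  by (rule finite_subset[of _ "Pow V"]) (auto simp: total_k_dominating_def)

lemma gamma_2t_le:
  assumes "finite V" "total_k_dominating 2 V adj S"
  shows "gamma_2t V adj \<le> card S"
  unfolding gamma_2t_def using assms finite_total_k_dominating by (intro Min_le) auto

lemma gamma_2t_attained:
  assumes "finite V" "total_k_dominating 2 V adj S"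
  obtains T where "total_k_dominating 2 V adj T" "card T = gamma_2t V adj"
proof -
  have "gamma_2t V adj \<in> card ` {S. total_k_dominating 2 V adj S}"
    unfolding gamma_2t_def using assms finite_total_k_dominating by (intro Min_in) auto
  then show thesis
    using that by auto
qed

lemma gamma_2t_KK_commute: "gamma_2t_KK n m = gamma_2t_KK m n"
proof -
  let ?D = "\<lambda>n m. {S. total_k_dominating 2 ({0..<n} \<times> {0..<m}) rook_adj S}"
  have "?D m n = image prod.swap ` ?D n m"
  proof (intro set_eqI iffI)
    fix S assume "S \<in> ?D m n"
    then have "prod.swap ` S \<in> ?D n m"
      by (simp add: total_k_dominating_rook_swap)
    then show "S \<in> image prod.swap ` ?D n m"
      by (rule rev_image_eqI) (simp add: image_image)
  qed (auto simp: total_k_dominating_rook_swap)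
  then have "card ` ?D m n = card ` ?D n m"
    by (simp add: image_image card_image)
  then show ?thesis
    unfolding gamma_2t_KK_def gamma_2t_def by simp
qed

lemma three_le_card:
  assumes "finite X" "a \<in> X" "b \<in> X" "c \<in> X" "distinct [a, b, c]"
  shows "3 \<le> card X"
proof -
  have "card {a, b, c} \<le> card X"
    using assms(1-4) by (intro card_mono) auto
  then show ?thesis
    using assms(5) by simp
qed

lemma total_2_dominating_two_rows:
  assumes "2 \<le> n" "2 \<le> m"
  shows "total_k_dominating 2 ({0..<n} \<times> {0..<m}) rook_adj ({0, 1} \<times> {0..<m})"
proof -
  let ?S = "{0, 1::nat} \<times> {0..<m}"
  have "row ?S i = (if i \<le> 1 then {i} \<times> {0..<m} else {})" for i
    by (auto simp: row_def)
  then have "card (row ?S i) = (if i \<le> 1 then m else 0)" for i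
    by (simp add: card_cartesian_product)
  moreover have "col ?S j = {0, 1} \<times> {j}" if "j < m" for j
    using that by (auto simp: col_def)
  then have "card (col ?S j) = 2" if "j < m" for j
    using that by (simp add: card_cartesian_product)
  ultimately show ?thesis
    unfolding total_k_dominating_rook_iff[OF finite_atLeastLessThan finite_atLeastLessThan]
    using assms by auto
qed

definition cross :: "nat \<Rightarrow> nat \<Rightarrow> (nat \<times> nat) set" where
  "cross n m = {0} \<times> {0..<m} \<union> {0..<n} \<times> {0}"

lemma card_cross:
  assumes "1 \<le> n" "1 \<le> m"
  shows "card (cross n m) = n + m - 1"
proof -
  have "cross n m = {0} \<times> {0..<m} \<union> {1..<n} \<times> {0}"
    using assms by (auto simp: cross_def)
  moreover have "card ({0} \<times> {0..<m} \<union> {1..<n} \<times> {0}) = m + (n - 1)"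
    by (subst card_Un_disjoint) (auto simp: card_cartesian_product)
  ultimately show ?thesis
    using assms by simp
qed

lemma total_2_dominating_cross:
  assumes "3 \<le> n" "3 \<le> m"
  shows "total_k_dominating 2 ({0..<n} \<times> {0..<m}) rook_adj (cross n m)"
proof (rule total_2_dominating_rookI)
  have fin: "finite (cross n m)"
    by (simp add: cross_def)
  show "cross n m \<subseteq> {0..<n} \<times> {0..<m}"
    using assms by (auto simp: cross_def)
  show "row (cross n m) i \<noteq> {}" if "i \<in> {0..<n}" for i
    using that assms by (auto simp: row_def cross_def)
  show "col (cross n m) j \<noteq> {}" if "j \<in> {0..<m}" for j
    using that assms by (auto simp: col_def cross_def)
  have "3 \<le> card (row (cross n m) 0)"
    using assms by (intro three_le_card[of _ "(0, 0)" "(0, 1)" "(0, 2)"] finite_row[OF fin])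
      (auto simp: row_def cross_def)
  moreover have "3 \<le> card (col (cross n m) 0)"
    using assms by (intro three_le_card[of _ "(0, 0)" "(1, 0)" "(2, 0)"] finite_col[OF fin])
      (auto simp: col_def cross_def)
  ultimately show "3 \<le> card (row (cross n m) i) \<or> 3 \<le> card (col (cross n m) j)"
    if "(i, j) \<in> cross n m" for i j
    using that by (auto simp: cross_def)
qed simp_all

text \<open>Rows x, ..., n-1 carry one point each, placed cyclically in columns 0, ..., y-1, and
  columns y, ..., m-1 one point each, cyclically in rows 0, ..., x-1. Under x + 3y \<le> n and
  3x + y \<le> m every one of the first x rows and first y columns thus receives three points.\<close>

definition wrapped_diagonals :: "nat \<Rightarrow> nat \<Rightarrow> nat \<Rightarrow> nat \<Rightarrow> (nat \<times> nat) set" where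
  "wrapped_diagonals n m x y =
     (\<lambda>i. (i, (i - x) mod y)) ` {x..<n} \<union> (\<lambda>j. ((j - y) mod x, j)) ` {y..<m}"

lemma card_wrapped_diagonals:
  assumes "1 \<le> x" "1 \<le> y"
  shows "card (wrapped_diagonals n m x y) = (n - x) + (m - y)"
  unfolding wrapped_diagonals_def using assms
  by (subst card_Un_disjoint) (auto simp: card_image inj_on_def)

lemma total_2_dominating_wrapped_diagonals:
  assumes "1 \<le> x" "1 \<le> y" "x + 3 * y \<le> n" "3 * x + y \<le> m"
  shows "total_k_dominating 2 ({0..<n} \<times> {0..<m}) rook_adj (wrapped_diagonals n m x y)"
proof (rule total_2_dominating_rookI)
  let ?S = "wrapped_diagonals n m x y"
  have fin: "finite ?S"
    by (simp add: wrapped_diagonals_def)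
  have in_row: "(i, (i - x) mod y) \<in> ?S" if "x \<le> i" "i < n" for i
    using that by (auto simp: wrapped_diagonals_def)
  have in_col: "((j - y) mod x, j) \<in> ?S" if "y \<le> j" "j < m" for j
    using that by (auto simp: wrapped_diagonals_def)
  have long_row: "3 \<le> card (row ?S i)" if "i < x" for i
  proof -
    have "(i, y + i + k * x) \<in> ?S" if "k \<le> 2" for k
    proof -
      have "k * x \<le> 2 * x"
        using that by simp
      then have "y + i + k * x < m"
        using \<open>i < x\<close> assms by linarith
      then show ?thesis
        using in_col[of "y + i + k * x"] \<open>i < x\<close> by simp
    qed
    from this[of 0] this[of 1] this[of 2] show ?thesis
      using assms
      by (intro three_le_card[of _ "(i, y + i)" "(i, y + i + x)" "(i, y + i + 2 * x)"] finite_row[OF fin])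
        (auto simp: row_def)
  qed
  have long_col: "3 \<le> card (col ?S j)" if "j < y" for j
  proof -
    have "(x + j + k * y, j) \<in> ?S" if "k \<le> 2" for k
    proof -
      have "k * y \<le> 2 * y"
        using that by simp
      then have "x + j + k * y < n"
        using \<open>j < y\<close> assms by linarith
      then show ?thesis
        using in_row[of "x + j + k * y"] \<open>j < y\<close> by simp
    qed
    from this[of 0] this[of 1] this[of 2] show ?thesis
      using assms
      by (intro three_le_card[of _ "(x + j, j)" "(x + j + y, j)" "(x + j + 2 * y, j)"] finite_col[OF fin])
        (auto simp: col_def)
  qed
  have "(i - x) mod y < y" "(j - y) mod x < x" for i j
    using assms by simp_all
  moreover have "y \<le> m" "x \<le> n"
    using assms by linarith+
  ultimately have "(i - x) mod y < m" "(j - y) mod x < n" for i j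
    by (meson order.strict_trans2)+
  then show "?S \<subseteq> {0..<n} \<times> {0..<m}"
    by (auto simp: wrapped_diagonals_def)
  show "row ?S i \<noteq> {}" if "i \<in> {0..<n}" for i
  proof (cases "x \<le> i")
    case True
    then show ?thesis
      using that in_row[of i] by (auto simp: row_def)
  qed (use long_row[of i] in auto)
  show "col ?S j \<noteq> {}" if "j \<in> {0..<m}" for j
  proof (cases "y \<le> j")
    case True
    then show ?thesis
      using that in_col[of j] by (auto simp: col_def)
  qed (use long_col[of j] in auto)
  show "3 \<le> card (row ?S i) \<or> 3 \<le> card (col ?S j)" if "(i, j) \<in> ?S" for i j
  proof -
    have "i < x \<or> j < y"
      using that assms by (auto simp: wrapped_diagonals_def)
    then show ?thesis
      using long_row long_col by blast
  qed
qed simp_all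

lemma wrapped_diagonals_parameters_exist:
  fixes a b :: nat
  assumes "a \<le> b" "3 * b + 5 < 5 * a" "10 \<le> a + b"
  obtains x y where "1 \<le> x" "1 \<le> y" "x + 3 * y \<le> a" "3 * x + y \<le> b" "a + b \<le> 4 * (x + y) + 5"
proof -
  \<comment> \<open>s = x + y is as small as the size bound allows; x is the least value with x + 3y \<le> a.\<close>
  define s where "s = (a + b - 2) div 4"
  define x where "x = max 1 ((3 * s + 1 - a) div 2)"
  have s: "a + b \<le> 4 * s + 5" "4 * s + 2 \<le> a + b" "2 \<le> s"
    unfolding s_def using assms by linarith+
  have x: "1 \<le> x" "x < s" "3 * s \<le> a + 2 * x" "s + 2 * x \<le> b"
    unfolding x_def using s assms by linarith+
  define y where "y = s - x"
  have xy: "x + y = s"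
    using x by (simp add: y_def)
  have "1 \<le> y" "x + 3 * y \<le> a" "3 * x + y \<le> b"
    using s x xy by linarith+
  moreover have "a + b \<le> 4 * (x + y) + 5"
    using s(1) xy by simp
  ultimately show thesis
    by (rule that[OF x(1)])
qed

lemma gamma_2t_KK_le_twice_min:
  assumes "2 \<le> n" "2 \<le> m"
  shows "gamma_2t_KK n m \<le> 2 * min n m"
proof -
  have "gamma_2t_KK a b \<le> 2 * b" if "2 \<le> a" "2 \<le> b" for a b
    using gamma_2t_le[OF _ total_2_dominating_two_rows[OF that]]
    by (simp add: gamma_2t_KK_def card_cartesian_product)
  from this[of n m] this[of m n] have "gamma_2t_KK n m \<le> 2 * m" "gamma_2t_KK n m \<le> 2 * n"
    using assms gamma_2t_KK_commute[of n m] by linarith+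
  then show ?thesis
    by (simp add: min_def)
qed

lemma gamma_2t_KK_le:
  assumes "2 \<le> n" "2 \<le> m"
  shows "4 * gamma_2t_KK n m \<le> 3 * (n + m) + 5"
proof -
  have "4 * gamma_2t_KK a b \<le> 3 * (a + b) + 5" if "2 \<le> a" "a \<le> b" for a b
  proof -
    have le_card: "gamma_2t_KK a b \<le> card S"
      if "total_k_dominating 2 ({0..<a} \<times> {0..<b}) rook_adj S" for S
      unfolding gamma_2t_KK_def using that by (intro gamma_2t_le) auto
    consider "5 * a \<le> 3 * b + 5" | "3 * b + 5 < 5 * a" "a + b \<le> 9" | "3 * b + 5 < 5 * a" "10 \<le> a + b"
      by linarith
    then show ?thesis
    proof cases
      case 1
      then show ?thesis
        using gamma_2t_KK_le_twice_min[of a b] \<open>2 \<le> a\<close> \<open>a \<le> b\<close> by simp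
    next
      case 2
      then have "3 \<le> a"
        using \<open>a \<le> b\<close> by linarith
      then have "gamma_2t_KK a b + 1 \<le> a + b"
        using le_card[OF total_2_dominating_cross] card_cross \<open>a \<le> b\<close> by fastforce
      then show ?thesis
        using 2 by (simp add: distrib_left; linarith)
    next
      case 3
      then obtain x y where xy: "1 \<le> x" "1 \<le> y" "x + 3 * y \<le> a" "3 * x + y \<le> b"
        and "a + b \<le> 4 * (x + y) + 5"
        using \<open>a \<le> b\<close> wrapped_diagonals_parameters_exist by blast
      moreover have "gamma_2t_KK a b + (x + y) \<le> a + b"
        using le_card[OF total_2_dominating_wrapped_diagonals[OF xy]] card_wrapped_diagonals xy by simp
      ultimately show ?thesis
        by (simp add: distrib_left; linarith)
    qed
  qed
  from this[of n m] this[of m n] show ?thesis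
    using assms gamma_2t_KK_commute[of n m] by (cases "n \<le> m") (simp_all add: add.commute)
qed

lemma gamma_2t_KK_ge:
  assumes "2 \<le> n" "2 \<le> m"
  shows "2 * min n m \<le> gamma_2t_KK n m \<or> 3 * (n + m) \<le> 4 * gamma_2t_KK n m"
proof -
  obtain S where "total_k_dominating 2 ({0..<n} \<times> {0..<m}) rook_adj S" "card S = gamma_2t_KK n m"
    using gamma_2t_attained[OF _ total_2_dominating_two_rows[OF assms]] unfolding gamma_2t_KK_def by blast
  then show ?thesis
    using total_2_dominating_rook_card_lower[of "{0..<n}" "{0..<m}" S] by simp
qed

theorem lemma11:
  fixes n m :: nat
  assumes "n \<ge> 2" and "m \<ge> 2"
  shows "gamma_2t_KK n m + 1 \<le> gamma_2t_KK (n+1) (m+1) \<and>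
         gamma_2t_KK (n+1) (m+1) \<le> gamma_2t_KK n m + 2"
proof -
  have succ: "2 \<le> n + 1" "2 \<le> m + 1"
    using assms by simp_all
  note bounds = gamma_2t_KK_le_twice_min gamma_2t_KK_le gamma_2t_KK_ge
  show ?thesis
    using bounds[OF assms] bounds[OF succ] by (simp add: distrib_left; elim disjE; linarith)
qed

end
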